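(* Let $\Lambda=(\Lambda_\nu)_{\nu=1}^d$ with $\Lambda_\nu\subset\mathbb{Z}_+^n$ finite nonempty, $P\in\mathcal{P}_\Lambda$, $S\subset N_n$, and let $\mathbb{F}=(\mathbb{F}_\nu)$ be a $d$-tuple with $\mathbb{F}_\nu$ a face of ${\bf N}(\Lambda_\nu,S)$. Suppose $\sup_{r\in I(S),\xi\in\mathbb{R}^d}|\mathcal{I}(P,\xi,r)|<\infty$, and suppose there is $u=(u_j)\in\bigcap_{\nu=1}^d(\mathbb{F}_\nu^* )^\circ$ with $u_j=0$ for $j\in S_0$ and $u_j>0$ for $j\in S\setminus S_0$, where $S_0\subset S$. Then $$\sup\big\{|\mathcal{I}(P_{\mathbb{F}},\xi,a,b)|:\xi\in\mathbb{R}^d,\ a,b\in I(S_0),\ a_j<b_j\ \forall j\big\}<\infty.$$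
   Context: $P=(P_\nu)$, $P_\nu(t)=\sum_{\mathfrak m\in\Lambda_\nu}c^\nu_{\mathfrak m}t^{\mathfrak m}$ with nonzero real coefficients ($\mathcal{P}_\Lambda$ is the set of such). For $T\subset N_n=\{1,\dots,n\}$, $I(T)=\prod_jI_j$ with $I_j=(0,1)$ for $j\in T$ and $I_j=(0,\infty)$ otherwise. $\mathcal{I}(P,\xi,r)=\lim_{\epsilon\to0}\int_{\prod_j\{\epsilon_j<|t_j|<r_j\}}e^{i\langle\xi,P(t)\rangle}\frac{dt_1}{t_1}\cdots\frac{dt_n}{t_n}$. $\mathcal{I}(P_{\mathbb{F}},\xi,a,b)=\int_{\prod_j\{a_j<|t_j|<b_j\}}\exp\big(i\sum_\nu\xi_\nu\sum_{\mathfrak m\in\mathbb{F}_\nu\cap\Lambda_\nu}c^\nu_{\mathfrak m}t^{\mathfrak m}\big)\frac{dt_1}{t_1}\cdots\frac{dt_n}{t_n}$. $\mathbb{R}_+^S=\{u:u_j\ge0\ (j\in S),u_j=0\ (j\notin S)\}$, $Z(S)=\{u:u_j\ge0\ \forall j\in S\}$, ${\bf N}(\Omega,S)=$ convex hull of $\Omega+\mathbb{R}_+^S$. Face: $\mathbb{F}\subset\mathbb{P}$ with $\mathbb{F}=\emptyset$ or $\exists\mathfrak q,r$: $\langle\mathfrak q,\cdot\rangle=r$ on $\mathbb{F}$, $>r$ on $\mathbb{P}\setminus\mathbb{F}$. For nonempty face, $(\mathbb{F}^* )^\circ=\{\mathfrak q\ne0:\exists r,\langle\mathfrak q,x\rangle=r\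 (x\in\mathbb{F}),\langle\mathfrak q,y\rangle>r\ (y\in\mathbb{P}\setminus\mathbb{F})\}$ relative to $\mathbb{P}={\bf N}(\Lambda_\nu,S)$; for the empty face, $(\mathbb{F}^* )^\circ=Z(S)\setminus\{0\}$. *)

theory Defs
  imports "HOL-Analysis.Analysis"
begin

text \<open>Indices j of N_n are the elements of a finite type 'n; indices nu of 1..d are
  the elements of a finite type 'd. Multi-indices in Z_+^n are functions 'n => nat.\<close>

definition monom :: "real^'n::finite \<Rightarrow> ('n \<Rightarrow> nat) \<Rightarrow> real" where
  "monom t m = (\<Prod>j\<in>UNIV. (t$j) ^ (m j))"

definition polyP :: "(('n::finite \<Rightarrow> nat) \<Rightarrow> real) \<Rightarrow> ('n \<Rightarrow> nat) set \<Rightarrow> real^'n \<Rightarrow> real" where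
  "polyP c L t = (\<Sum>m\<in>L. c m * monom t m)"

definition IS :: "'n::finite set \<Rightarrow> (real^'n) set" where
  "IS T = {r. \<forall>j. 0 < r$j \<and> (j \<in> T \<longrightarrow> r$j < 1)}"

definition osc_int :: "('d::finite \<Rightarrow> real^'n::finite \<Rightarrow> real) \<Rightarrow> real^'d \<Rightarrow> real^'n \<Rightarrow> real^'n \<Rightarrow> complex" where
  "osc_int Q \<xi> a b =
     (LINT t : {t. \<forall>j. a$j < \<bar>t$j\<bar> \<and> \<bar>t$j\<bar> < b$j} | lborel.
        exp (\<i> * complex_of_real (\<Sum>\<nu>\<in>UNIV. \<xi>$\<nu> * Q \<nu> t)) / complex_of_real (\<Prod>j\<in>UNIV. t$j))"

definition mvec :: "('n::finite \<Rightarrow> nat) \<Rightarrow> real^'n" where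
  "mvec m = (\<chi> j. real (m j))"

definition Rplus :: "'n::finite set \<Rightarrow> (real^'n) set" where
  "Rplus S = {u. \<forall>j. (j \<in> S \<longrightarrow> 0 \<le> u$j) \<and> (j \<notin> S \<longrightarrow> u$j = 0)}"

definition Zset :: "'n::finite set \<Rightarrow> (real^'n) set" where
  "Zset S = {u. \<forall>j\<in>S. 0 \<le> u$j}"

definition newton :: "('n::finite \<Rightarrow> nat) set \<Rightarrow> 'n set \<Rightarrow> (real^'n) set" where
  "newton \<Omega> S = convex hull {mvec m + u | m u. m \<in> \<Omega> \<and> u \<in> Rplus S}"

definition is_face :: "(real^'n::finite) set \<Rightarrow> (real^'n) set \<Rightarrow> bool" where
  "is_face F P \<longleftrightarrow> F \<subseteq> P \<and>
     (F = {} \<or> (\<exists>q r. (\<forall>x\<in>F. q \<bullet> x = r) \<and> (\<forall>y\<in>P - F. q \<bullet> y > r)))"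

definition dual_int :: "(real^'n::finite) set \<Rightarrow> (real^'n) set \<Rightarrow> 'n set \<Rightarrow> (real^'n) set" where
  "dual_int F P S = (if F = {} then Zset S - {0}
     else {q. q \<noteq> 0 \<and> (\<exists>r. (\<forall>x\<in>F. q \<bullet> x = r) \<and> (\<forall>y\<in>P - F. q \<bullet> y > r))})"

end

theory Submission
  imports Defs
begin

text \<open>Rescale \<open>t\<^sub>j = \<delta>^u\<^sub>j s\<^sub>j\<close>. Because \<open>u\<close> lies in every dual cone \<open>(F\<^sub>\<nu>\<^sup>*)\<^sup>\<circ>\<close>, the form
  \<open>\<langle>u,\<cdot>\<rangle>\<close> is constant, say \<open>r\<^sub>\<nu>\<close>, on the exponents of \<open>\<Lambda>\<^sub>\<nu>\<close> lying in \<open>F\<^sub>\<nu>\<close> and strictly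
  larger on the others. Hence \<open>\<delta>^-r\<^sub>\<nu> P\<^sub>\<nu>(\<delta>^u s) \<rightarrow> P\<^sub>F\<^sub>,\<^sub>\<nu>(s)\<close> as \<open>\<delta> \<rightarrow> 0\<close>, and with \<open>\<xi>\<^sub>\<nu>\<close>
  replaced by \<open>\<delta>^-r\<^sub>\<nu> \<xi>\<^sub>\<nu>\<close> the rescaled integrals over \<open>a < |s| < b\<close> converge to the integral
  for \<open>P\<^sub>F\<close> by dominated convergence. For small \<open>\<delta>\<close> the rescaled outer corner \<open>\<delta>^u b\<close> lies
  in \<open>I(S)\<close>, since \<open>u\<^sub>j > 0\<close> on \<open>S - S\<^sub>0\<close> and \<open>b\<^sub>j < 1\<close> on \<open>S\<^sub>0\<close>. Finally, an integral over
  \<open>\<alpha> < |t| < \<beta>\<close> is an alternating sum of \<open>2\<^sup>n\<close> integrals over \<open>\<epsilon> < |t| < r\<close> with \<open>r \<in> I(S)\<close>;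
  letting \<open>\<epsilon> \<rightarrow> 0\<close> bounds it by \<open>2\<^sup>n\<close> times the assumed bound.\<close>

definition annulus_box :: "real^'n::finite \<Rightarrow> real^'n \<Rightarrow> (real^'n) set" where
  "annulus_box lo hi = {t. \<forall>j. lo$j < \<bar>t$j\<bar> \<and> \<bar>t$j\<bar> < hi$j}"

definition osc_density :: "('d::finite \<Rightarrow> real^'n::finite \<Rightarrow> real) \<Rightarrow> real^'d \<Rightarrow> real^'n \<Rightarrow> complex" where
  "osc_density Q \<xi> t =
     exp (\<i> * complex_of_real (\<Sum>\<nu>\<in>UNIV. \<xi>$\<nu> * Q \<nu> t)) / complex_of_real (\<Prod>j\<in>UNIV. t$j)"

definition diag_scale :: "real^'n::finite \<Rightarrow> real^'n \<Rightarrow> real^'n" where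
  "diag_scale D x = (\<chi> j. D$j * x$j)"

definition corner :: "real^'n::finite \<Rightarrow> real^'n \<Rightarrow> 'n set \<Rightarrow> real^'n" where
  "corner a b T = (\<chi> j. if j \<in> T then a$j else b$j)"

lemma osc_int_eq_set_integral:
  "osc_int Q \<xi> a b = (LINT t : annulus_box a b | lborel. osc_density Q \<xi> t)"
  unfolding osc_int_def annulus_box_def osc_density_def by simp

lemma annulus_box_borel [measurable]: "annulus_box lo hi \<in> sets borel"
  unfolding annulus_box_def by measurable

lemma polyP_borel [measurable]: "polyP c L \<in> borel_measurable borel"
  unfolding polyP_def[abs_def] monom_def by measurable

lemma diag_scale_borel [measurable]: "diag_scale D \<in> borel_measurable borel"
  unfolding diag_scale_def by (rule borel_measurable_continuous_onI) (intro continuous_intros)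

lemma osc_density_borel [measurable]:
  assumes [measurable]: "\<And>\<nu>. Q \<nu> \<in> borel_measurable borel"
  shows "osc_density Q \<xi> \<in> borel_measurable borel"
proof -
  have [measurable]: "(\<lambda>t::real^'n. complex_of_real (\<Prod>j\<in>UNIV. t$j)) \<in> borel_measurable borel"
    by (rule borel_measurable_continuous_onI) (intro continuous_intros)
  show ?thesis
    unfolding osc_density_def[abs_def] by measurable
qed

lemma bounded_annulus_box: "bounded (annulus_box lo hi)"
proof -
  have "annulus_box lo hi \<subseteq> cbox (-hi) hi"
    by (auto simp: annulus_box_def mem_box_cart abs_less_iff less_imp_le; smt (verit))
  then show ?thesis
    using bounded_cbox bounded_subset by blast
qed

lemma norm_osc_density_le:
  assumes lo: "\<forall>j. 0 < lo$j" and t: "t \<in> annulus_box lo hi"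
  shows "norm (osc_density Q \<xi> t) \<le> 1 / (\<Prod>j\<in>UNIV. lo$j)"
proof -
  have "(\<Prod>j\<in>UNIV. lo$j) \<le> (\<Prod>j\<in>UNIV. \<bar>t$j\<bar>)"
    using t lo by (intro prod_mono) (auto simp: annulus_box_def less_imp_le)
  moreover have "0 < (\<Prod>j\<in>UNIV. lo$j)"
    using lo by (intro prod_pos) auto
  moreover have "norm (osc_density Q \<xi> t) = 1 / (\<Prod>j\<in>UNIV. \<bar>t$j\<bar>)"
    by (simp add: osc_density_def norm_divide abs_prod flip: prod_norm)
  ultimately show ?thesis
    by (simp add: frac_le)
qed

lemma integrable_osc_density:
  assumes lo: "\<forall>j. 0 < lo$j" and [measurable]: "\<And>\<nu>. Q \<nu> \<in> borel_measurable borel"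
  shows "integrable lborel (\<lambda>t. indicator (annulus_box lo hi) t *\<^sub>R osc_density Q \<xi> t)"
proof (rule integrableI_bounded_set_indicator[where B = "1 / (\<Prod>j\<in>UNIV. lo$j)"])
  show "emeasure lborel (annulus_box lo hi) < \<infinity>"
    by (rule emeasure_bounded_finite[OF bounded_annulus_box])
  show "AE t \<in> annulus_box lo hi in lborel. norm (osc_density Q \<xi> t) \<le> 1 / (\<Prod>j\<in>UNIV. lo$j)"
    using norm_osc_density_le[OF lo] by (auto intro!: AE_I2)
qed simp_all

subsection \<open>Inclusion--exclusion over the corners of a box\<close>

lemma indicator_annulus_box:
  "indicator (annulus_box lo hi) t =
     (\<Prod>j\<in>UNIV. indicator {x::real. lo$j < \<bar>x\<bar> \<and> \<bar>x\<bar> < hi$j} (t$j) :: real)"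
  by (auto simp: annulus_box_def indicator_def prod_zero_iff)

lemma indicator_annulus_box_incl_excl:
  fixes \<epsilon> a b t :: "real^'n::finite"
  assumes ab: "\<forall>j. \<epsilon>$j < a$j \<and> a$j < b$j" and t: "\<forall>j. \<bar>t$j\<bar> \<noteq> a$j"
  shows "(\<Sum>T\<in>Pow UNIV. (-1)^card T * indicator (annulus_box \<epsilon> (corner a b T)) t) =
    (indicator (annulus_box a b) t :: real)"
proof -
  txt \<open>Off \<open>|t\<^sub>j| = a\<^sub>j\<close>, the indicator of \<open>a\<^sub>j < |t\<^sub>j| < b\<^sub>j\<close> is \<open>I(b\<^sub>j) - I(a\<^sub>j)\<close>;
    expanding the product over \<open>j\<close> gives the sum over corners.\<close>
  define I where "I = (\<lambda>c j. indicator {x::real. \<epsilon>$j < \<bar>x\<bar> \<and> \<bar>x\<bar> < c} (t$j) :: real)"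
  have corner: "(\<Prod>j\<in>T. - I (a$j) j) * (\<Prod>j\<in>UNIV - T. I (b$j) j) =
      (-1)^card T * indicator (annulus_box \<epsilon> (corner a b T)) t" for T
  proof -
    have "indicator (annulus_box \<epsilon> (corner a b T)) t = (\<Prod>j\<in>UNIV. I (corner a b T $ j) j)"
      unfolding I_def by (rule indicator_annulus_box)
    also have "\<dots> = (\<Prod>j\<in>UNIV - T. I (corner a b T $ j) j) * (\<Prod>j\<in>T. I (corner a b T $ j) j)"
      by (rule prod.subset_diff) auto
    also have "\<dots> = (\<Prod>j\<in>UNIV - T. I (b$j) j) * (\<Prod>j\<in>T. I (a$j) j)"
      by (auto simp: corner_def intro!: arg_cong2[where f = "(*)"] prod.cong)
    moreover have "(\<Prod>j\<in>T. - I (a$j) j) = (-1)^card T * (\<Prod>j\<in>T. I (a$j) j)"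
      by (subst prod.distrib[of "\<lambda>_. -1", simplified, symmetric]) simp
    ultimately show ?thesis
      by simp
  qed
  have "indicator (annulus_box a b) t = (\<Prod>j\<in>UNIV. - I (a$j) j + I (b$j) j)"
    unfolding indicator_annulus_box
  proof (rule prod.cong[OF refl])
    show "indicator {x. a$j < \<bar>x\<bar> \<and> \<bar>x\<bar> < b$j} (t$j) = - I (a$j) j + I (b$j) j" for j
      using ab[rule_format, of j] t[rule_format, of j] by (auto simp: I_def indicator_def)
  qed
  also have "\<dots> = (\<Sum>T\<in>Pow UNIV. (\<Prod>j\<in>T. - I (a$j) j) * (\<Prod>j\<in>UNIV - T. I (b$j) j))"
    by (rule prod_add) simp
  finally show ?thesis
    by (simp add: corner)
qed

lemma AE_abs_component_ne: "AE t in lborel. \<forall>j. \<bar>(t::real^'n::finite)$j\<bar> \<noteq> a$j"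
proof (rule AE_finite_allI[where S = UNIV, simplified])
  have null: "{t::real^'n. t$j = c} \<in> null_sets lborel" for j c
  proof -
    have "negligible {t::real^'n. t \<bullet> axis j 1 = c}"
      by (rule negligible_standard_hyperplane) (auto simp: Basis_vec_def)
    then show ?thesis
      by (simp add: cart_eq_inner_axis negligible_iff_null_sets null_sets_completion_iff)
  qed
  show "AE t in lborel. \<bar>(t::real^'n)$j\<bar> \<noteq> a$j" for j
    by (rule AE_I'[OF null_sets.Un[OF null[of j "a$j"] null[of j "- a$j"]]]) auto
qed simp

lemma osc_int_incl_excl:
  assumes [measurable]: "\<And>\<nu>. Q \<nu> \<in> borel_measurable borel"
    and ab: "\<forall>j. 0 < \<epsilon>$j \<and> \<epsilon>$j < a$j \<and> a$j < b$j"
  shows "osc_int Q \<xi> a b = (\<Sum>T\<in>Pow UNIV. (-1)^card T * osc_int Q \<xi> \<epsilon> (corner a b T))"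
proof -
  define f where "f lo hi t = indicator (annulus_box lo hi) t *\<^sub>R osc_density Q \<xi> t" for lo hi t
  have [measurable]: "f lo hi \<in> borel_measurable borel" for lo hi
    unfolding f_def by measurable
  have "(\<Sum>T\<in>Pow UNIV. (-1)^card T * osc_int Q \<xi> \<epsilon> (corner a b T)) =
      (\<Sum>T\<in>Pow UNIV. LINT t|lborel. (-1)^card T * f \<epsilon> (corner a b T) t)"
    unfolding osc_int_eq_set_integral set_lebesgue_integral_def f_def[abs_def]
    by (intro sum.cong refl integral_mult_right_zero[symmetric])
  also have "\<dots> = (LINT t|lborel. (\<Sum>T\<in>Pow UNIV. (-1)^card T * f \<epsilon> (corner a b T) t))"
    using ab by (intro Bochner_Integration.integral_sum[symmetric] integrable_mult_right)
      (auto simp: f_def intro: integrable_osc_density)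
  also have "\<dots> = (LINT t|lborel. f a b t)"
  proof (rule integral_cong_AE)
    show "AE t in lborel. (\<Sum>T\<in>Pow UNIV. (-1)^card T * f \<epsilon> (corner a b T) t) = f a b t"
      using AE_abs_component_ne[of a]
    proof eventually_elim
      case (elim t)
      then have "(\<Sum>T\<in>Pow UNIV. (-1)^card T * indicator (annulus_box \<epsilon> (corner a b T)) t) =
          (indicator (annulus_box a b) t :: real)"
        using ab by (intro indicator_annulus_box_incl_excl) auto
      moreover have "(\<Sum>T\<in>Pow UNIV. (-1)^card T * f \<epsilon> (corner a b T) t) =
          complex_of_real (\<Sum>T\<in>Pow UNIV. (-1)^card T * indicator (annulus_box \<epsilon> (corner a b T)) t) *
            osc_density Q \<xi> t"
        by (simp only: f_def scaleR_conv_of_real sum_distrib_right of_real_sum of_real_mult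
            of_real_power of_real_minus of_real_1 mult.assoc)
      ultimately show ?case
        by (simp add: f_def scaleR_conv_of_real)
    qed
  qed measurable
  finally show ?thesis
    by (simp add: osc_int_eq_set_integral set_lebesgue_integral_def f_def)
qed

subsection \<open>Bounds from the limits \<open>\<epsilon> \<rightarrow> 0\<close>\<close>

lemma trivial_limit_at_positive_orthant:
  "\<not> trivial_limit (at (0::real^'n::finite) within {\<epsilon>. \<forall>j. 0 < \<epsilon>$j})"
proof -
  have "(\<lambda>k. \<chi> j::'n. inverse (real (Suc k))) \<longlonglongrightarrow> (\<chi> j. 0)"
    by (intro tendsto_vec_lambda LIMSEQ_inverse_real_of_nat)
  then have "(0::real^'n) islimpt {\<epsilon>. \<forall>j. 0 < \<epsilon>$j}"
    unfolding islimpt_sequential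
    by (intro exI[of _ "\<lambda>k. \<chi> j. inverse (real (Suc k))"]) (auto simp: vec_eq_iff zero_vec_def)
  then show ?thesis
    by (simp add: trivial_limit_within)
qed

lemma eventually_at_positive_orthant_less:
  assumes "\<forall>j. 0 < a$j"
  shows "eventually (\<lambda>\<epsilon>. \<forall>j. 0 < \<epsilon>$j \<and> \<epsilon>$j < a$j) (at (0::real^'n::finite) within {\<epsilon>. \<forall>j. 0 < \<epsilon>$j})"
proof -
  have "eventually (\<lambda>\<epsilon>. \<epsilon>$j < a$j) (at (0::real^'n) within {\<epsilon>. \<forall>j. 0 < \<epsilon>$j})" for j
  proof (rule order_tendstoD)
    show "((\<lambda>\<epsilon>. \<epsilon>$j) \<longlongrightarrow> 0$j) (at (0::real^'n) within {\<epsilon>. \<forall>j. 0 < \<epsilon>$j})"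
      by (intro tendsto_vec_nth tendsto_ident_at)
  qed (use assms in simp)
  then have "eventually (\<lambda>\<epsilon>. \<forall>j. \<epsilon>$j < a$j) (at (0::real^'n) within {\<epsilon>. \<forall>j. 0 < \<epsilon>$j})"
    by (rule eventually_all_finite)
  moreover have "eventually (\<lambda>\<epsilon>. \<forall>j. 0 < \<epsilon>$j) (at (0::real^'n) within {\<epsilon>. \<forall>j. 0 < \<epsilon>$j})"
    by (simp add: eventually_at_filter)
  ultimately show ?thesis
    by eventually_elim simp
qed

lemma norm_osc_int_le_of_limits:
  fixes Q :: "'d::finite \<Rightarrow> real^'n::finite \<Rightarrow> real"
  assumes [measurable]: "\<And>\<nu>. Q \<nu> \<in> borel_measurable borel"
    and lim: "\<forall>r\<in>IS S. \<forall>\<xi>. \<exists>L. ((\<lambda>\<epsilon>. osc_int Q \<xi> \<epsilon> r) \<longlongrightarrow> L) (at 0 within {\<epsilon>. \<forall>j. 0 < \<epsilon>$j}) \<and> norm L \<le> M"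
    and ab: "\<forall>j. 0 < a$j \<and> a$j < b$j" and b: "b \<in> IS S"
  shows "norm (osc_int Q \<xi> a b) \<le> 2 ^ CARD('n) * M"
proof -
  let ?F = "at (0::real^'n) within {\<epsilon>. \<forall>j. 0 < \<epsilon>$j}"
  have "corner a b T \<in> IS S" for T
    using ab b by (auto simp: IS_def corner_def) (meson less_trans)
  then have "\<forall>T. \<exists>L. ((\<lambda>\<epsilon>. osc_int Q \<xi> \<epsilon> (corner a b T)) \<longlongrightarrow> L) ?F \<and> norm L \<le> M"
    using lim by blast
  then obtain L where L: "\<And>T. ((\<lambda>\<epsilon>. osc_int Q \<xi> \<epsilon> (corner a b T)) \<longlongrightarrow> L T) ?F"
    "\<And>T. norm (L T) \<le> M"
    by metis
  have "((\<lambda>\<epsilon>. \<Sum>T\<in>Pow UNIV. (-1)^card T * osc_int Q \<xi> \<epsilon> (corner a b T))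
      \<longlongrightarrow> (\<Sum>T\<in>Pow UNIV. (-1)^card T * L T)) ?F"
    by (intro tendsto_intros L)
  moreover have "eventually (\<lambda>\<epsilon>. \<forall>j. 0 < \<epsilon>$j \<and> \<epsilon>$j < a$j) ?F"
    using ab by (intro eventually_at_positive_orthant_less) simp
  then have "eventually (\<lambda>\<epsilon>. (\<Sum>T\<in>Pow UNIV. (-1)^card T * osc_int Q \<xi> \<epsilon> (corner a b T)) =
      osc_int Q \<xi> a b) ?F"
  proof (rule eventually_mono)
    fix \<epsilon> :: "real^'n" assume "\<forall>j. 0 < \<epsilon>$j \<and> \<epsilon>$j < a$j"
    then show "(\<Sum>T\<in>Pow UNIV. (-1)^card T * osc_int Q \<xi> \<epsilon> (corner a b T)) = osc_int Q \<xi> a b"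
      using ab by (intro osc_int_incl_excl[symmetric]) auto
  qed
  ultimately have "((\<lambda>\<epsilon>. osc_int Q \<xi> a b) \<longlongrightarrow> (\<Sum>T\<in>Pow UNIV. (-1)^card T * L T)) ?F"
    by (rule Lim_transform_eventually)
  then have "osc_int Q \<xi> a b = (\<Sum>T\<in>Pow UNIV. (-1)^card T * L T)"
    using tendsto_unique[OF trivial_limit_at_positive_orthant tendsto_const] by blast
  also have "norm \<dots> \<le> (\<Sum>T\<in>Pow (UNIV::'n set). M)"
    by (rule order_trans[OF norm_sum sum_mono]) (simp add: norm_mult norm_power L)
  finally show ?thesis
    by (simp add: card_Pow)
qed

subsection \<open>Anisotropic rescaling\<close>

lemma integral_diag_scale:
  fixes f :: "real^'n::finite \<Rightarrow> complex"
  assumes [measurable]: "f \<in> borel_measurable borel" and D: "\<forall>j. 0 < D$j"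
  shows "integral\<^sup>L lborel f = (\<Prod>j\<in>UNIV. D$j) *\<^sub>R integral\<^sup>L lborel (\<lambda>s. f (diag_scale D s))"
proof -
  define c where "c b = D \<bullet> b" for b :: "real^'n"
  have c_axis: "c (axis i 1) = D$i" for i
    by (simp add: c_def cart_eq_inner_axis)
  have c_nonzero: "c j \<noteq> 0" if "j \<in> Basis" for j
    using that D by (auto simp: Basis_vec_def c_axis) (metis less_irrefl)
  have affine: "(\<lambda>x. \<Sum>j\<in>Basis. (c j * (x \<bullet> j)) *\<^sub>R j) = diag_scale D"
  proof
    fix x :: "real^'n"
    have "(\<Sum>j\<in>Basis. (c j * (x \<bullet> j)) *\<^sub>R j) = (\<Sum>j\<in>Basis. (diag_scale D x \<bullet> j) *\<^sub>R j)"
      by (intro sum.cong refl)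
         (auto simp: Basis_vec_def c_axis diag_scale_def cart_eq_inner_axis[symmetric])
    then show "(\<Sum>j\<in>Basis. (c j * (x \<bullet> j)) *\<^sub>R j) = diag_scale D x"
      by (simp add: euclidean_representation)
  qed
  have jacobian: "(\<Prod>j\<in>Basis. \<bar>c j\<bar>) = (\<Prod>j\<in>UNIV. D$j)"
  proof -
    have "inj (\<lambda>i::'n. axis i (1::real))"
      by (auto simp: inj_def axis_eq_axis)
    then have "(\<Prod>j\<in>Basis. \<bar>c j\<bar>) = (\<Prod>i\<in>UNIV. \<bar>c (axis i 1)\<bar>)"
      unfolding Basis_vec_def by (simp add: prod.reindex UNION_singleton_eq_range)
    also have "\<dots> = (\<Prod>j\<in>UNIV. D$j)"
      using D by (intro prod.cong) (auto simp: c_axis less_imp_le)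
    finally show ?thesis .
  qed
  have "integral\<^sup>L lborel f =
      integral\<^sup>L (density (distr lborel borel (diag_scale D)) (\<lambda>_. \<Prod>j\<in>Basis. \<bar>c j\<bar>)) f"
    using lborel_affine_euclidean[of c 0, OF c_nonzero] by (simp add: affine)
  also have "\<dots> = integral\<^sup>L (distr lborel borel (diag_scale D)) (\<lambda>x. (\<Prod>j\<in>Basis. \<bar>c j\<bar>) *\<^sub>R f x)"
    by (rule integral_density) (auto simp: prod_nonneg)
  also have "\<dots> = integral\<^sup>L lborel (\<lambda>s. (\<Prod>j\<in>Basis. \<bar>c j\<bar>) *\<^sub>R f (diag_scale D s))"
    by (rule integral_distr) auto
  finally show ?thesis
    by (simp add: jacobian)
qed

lemma diag_scale_mem_annulus_box_iff:
  assumes "\<forall>j. 0 < D$j"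
  shows "diag_scale D s \<in> annulus_box (diag_scale D a) (diag_scale D b) \<longleftrightarrow> s \<in> annulus_box a b"
proof -
  have "D$j * a$j < \<bar>D$j * s$j\<bar> \<and> \<bar>D$j * s$j\<bar> < D$j * b$j \<longleftrightarrow> a$j < \<bar>s$j\<bar> \<and> \<bar>s$j\<bar> < b$j" for j
    using assms[rule_format, of j] by (simp add: abs_mult)
  then show ?thesis
    by (simp add: annulus_box_def diag_scale_def)
qed

lemma osc_density_diag_scale:
  assumes "\<forall>j. 0 < D$j"
  shows "(\<Prod>j\<in>UNIV. D$j) *\<^sub>R osc_density Q \<xi> (diag_scale D s) =
    osc_density (\<lambda>\<nu> s. Q \<nu> (diag_scale D s)) \<xi> s"
proof -
  have "(\<Prod>j\<in>UNIV. D$j) \<noteq> 0"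
    using assms by (simp add: less_imp_neq[symmetric])
  then show ?thesis
    by (simp add: osc_density_def diag_scale_def prod.distrib scaleR_conv_of_real field_simps)
qed

lemma osc_int_diag_scale:
  assumes D: "\<forall>j. 0 < D$j" and [measurable]: "\<And>\<nu>. Q \<nu> \<in> borel_measurable borel"
  shows "osc_int Q \<xi> (diag_scale D a) (diag_scale D b) = osc_int (\<lambda>\<nu> s. Q \<nu> (diag_scale D s)) \<xi> a b"
proof -
  let ?A = "annulus_box (diag_scale D a) (diag_scale D b)"
  have "osc_int Q \<xi> (diag_scale D a) (diag_scale D b) =
      (LINT t|lborel. indicator ?A t *\<^sub>R osc_density Q \<xi> t)"
    by (simp add: osc_int_eq_set_integral set_lebesgue_integral_def)
  also have "\<dots> = (\<Prod>j\<in>UNIV. D$j) *\<^sub>R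
      (LINT s|lborel. indicator ?A (diag_scale D s) *\<^sub>R osc_density Q \<xi> (diag_scale D s))"
    by (rule integral_diag_scale[OF _ D]) measurable
  also have "\<dots> = (LINT s|lborel. indicator (annulus_box a b) s *\<^sub>R
      osc_density (\<lambda>\<nu> s. Q \<nu> (diag_scale D s)) \<xi> s)"
    unfolding integral_scaleR_right[symmetric]
    by (intro Bochner_Integration.integral_cong refl)
      (simp add: indicator_def diag_scale_mem_annulus_box_iff[OF D] osc_density_diag_scale[OF D, symmetric])
  finally show ?thesis
    by (simp add: osc_int_eq_set_integral set_lebesgue_integral_def)
qed

lemma eventually_diag_scale_mem_IS:
  assumes \<delta>: "\<And>k. 0 < \<delta> k" "\<delta> \<longlonglongrightarrow> 0"
    and u: "\<forall>j\<in>S0. u$j = 0" "\<forall>j\<in>S - S0. 0 < u$j" and b: "b \<in> IS S0"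
  shows "eventually (\<lambda>k. diag_scale (\<chi> j. \<delta> k powr (u$j)) b \<in> IS S) sequentially"
proof -
  have "eventually (\<lambda>k. \<delta> k powr (u$j) * b$j < 1) sequentially" if j: "j \<in> S - S0" for j
  proof (rule order_tendstoD)
    have "(\<lambda>k. \<delta> k powr (u$j)) \<longlonglongrightarrow> 0"
      using \<delta> u j by (intro tendsto_zero_powrI) (auto simp: less_imp_le)
    then show "(\<lambda>k. \<delta> k powr (u$j) * b$j) \<longlonglongrightarrow> 0"
      by (auto intro: tendsto_mult_left_zero)
  qed simp
  then have "eventually (\<lambda>k. \<forall>j\<in>S - S0. \<delta> k powr (u$j) * b$j < 1) sequentially"
    by (intro eventually_ball_finite) auto
  then show ?thesis
  proof (rule eventually_mono)
    fix k assume "\<forall>j\<in>S - S0. \<delta> k powr (u$j) * b$j < 1"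
    then show "diag_scale (\<chi> j. \<delta> k powr (u$j)) b \<in> IS S"
      using b u(1) \<delta>(1)[of k] by (auto simp: IS_def diag_scale_def)
  qed
qed

lemma eventually_norm_osc_int_rescaled_le:
  fixes Q :: "'d::finite \<Rightarrow> real^'n::finite \<Rightarrow> real"
  assumes [measurable]: "\<And>\<nu>. Q \<nu> \<in> borel_measurable borel"
    and lim: "\<forall>r\<in>IS S. \<forall>\<xi>. \<exists>L. ((\<lambda>\<epsilon>. osc_int Q \<xi> \<epsilon> r) \<longlongrightarrow> L) (at 0 within {\<epsilon>. \<forall>j. 0 < \<epsilon>$j}) \<and> norm L \<le> M"
    and \<delta>: "\<And>k. 0 < \<delta> k" "\<delta> \<longlonglongrightarrow> 0"
    and u: "\<forall>j\<in>S0. u$j = 0" "\<forall>j\<in>S - S0. 0 < u$j"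
    and ab: "a \<in> IS S0" "b \<in> IS S0" "\<forall>j. a$j < b$j"
  shows "eventually (\<lambda>k. norm (osc_int Q (\<xi> k) (diag_scale (\<chi> j. \<delta> k powr (u$j)) a)
    (diag_scale (\<chi> j. \<delta> k powr (u$j)) b)) \<le> 2 ^ CARD('n) * M) sequentially"
  using eventually_diag_scale_mem_IS[OF \<delta> u ab(2)]
proof (rule eventually_mono)
  fix k
  let ?D = "\<chi> j. \<delta> k powr (u$j)"
  assume "diag_scale ?D b \<in> IS S"
  moreover have "\<forall>j. 0 < diag_scale ?D a $ j \<and> diag_scale ?D a $ j < diag_scale ?D b $ j"
    using \<delta>(1)[of k] ab by (simp add: diag_scale_def IS_def)
  ultimately show "norm (osc_int Q (\<xi> k) (diag_scale ?D a) (diag_scale ?D b)) \<le> 2 ^ CARD('n) * M"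
    by (intro norm_osc_int_le_of_limits[OF _ lim]) simp_all
qed

subsection \<open>Passage to the face polynomials\<close>

lemma tendsto_osc_int:
  fixes Q :: "nat \<Rightarrow> 'd::finite \<Rightarrow> real^'n::finite \<Rightarrow> real"
  assumes a: "\<forall>j. 0 < a$j"
    and [measurable]: "\<And>k \<nu>. Q k \<nu> \<in> borel_measurable borel" "\<And>\<nu>. P \<nu> \<in> borel_measurable borel"
    and phase: "\<And>\<nu> s. (\<lambda>k. \<xi> k $ \<nu> * Q k \<nu> s) \<longlonglongrightarrow> \<eta>$\<nu> * P \<nu> s"
  shows "(\<lambda>k. osc_int (Q k) (\<xi> k) a b) \<longlonglongrightarrow> osc_int P \<eta> a b"
  unfolding osc_int_eq_set_integral set_lebesgue_integral_def
proof (rule integral_dominated_convergence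
    [where w = "\<lambda>s. indicator (annulus_box a b) s * (1 / (\<Prod>j\<in>UNIV. a$j))"])
  show "integrable lborel (\<lambda>s. indicator (annulus_box a b) s * (1 / (\<Prod>j\<in>UNIV. a$j)))"
    by (intro integrable_mult_left integrable_real_indicator emeasure_bounded_finite bounded_annulus_box)
      simp
  show "AE s in lborel. norm (indicator (annulus_box a b) s *\<^sub>R osc_density (Q k) (\<xi> k) s)
      \<le> indicator (annulus_box a b) s * (1 / (\<Prod>j\<in>UNIV. a$j))" for k
  proof (rule AE_I2)
    show "norm (indicator (annulus_box a b) s *\<^sub>R osc_density (Q k) (\<xi> k) s)
        \<le> indicator (annulus_box a b) s * (1 / (\<Prod>j\<in>UNIV. a$j))" for s
      using norm_osc_density_le[OF a, of s b] by (auto simp: indicator_def)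
  qed
  show "AE s in lborel. (\<lambda>k. indicator (annulus_box a b) s *\<^sub>R osc_density (Q k) (\<xi> k) s)
      \<longlonglongrightarrow> indicator (annulus_box a b) s *\<^sub>R osc_density P \<eta> s"
    unfolding osc_density_def divide_inverse by (intro AE_I2 tendsto_intros phase)
qed measurable

lemma monom_diag_scale_powr:
  assumes "0 < \<delta>"
  shows "monom (diag_scale (\<chi> j. \<delta> powr (u$j)) s) m = \<delta> powr (u \<bullet> mvec m) * monom s m"
proof -
  have "monom (diag_scale (\<chi> j. \<delta> powr (u$j)) s) m = (\<Prod>j\<in>UNIV. \<delta> powr (u$j * real (m j))) * monom s m"
    using assms by (simp add: monom_def diag_scale_def power_mult_distrib prod.distrib powr_realpow
        flip: powr_powr)
  also have "(\<Prod>j\<in>UNIV. \<delta> powr (u$j * real (m j))) = \<delta> powr (u \<bullet> mvec m)"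
    using assms by (simp add: powr_sum[symmetric] inner_vec_def mvec_def)
  finally show ?thesis .
qed

lemma tendsto_rescaled_polyP:
  assumes L: "finite L" and \<delta>: "\<And>k. 0 < \<delta> k" "\<delta> \<longlonglongrightarrow> 0"
    and level: "\<forall>m\<in>L. (mvec m \<in> G \<longrightarrow> u \<bullet> mvec m = r) \<and> (mvec m \<notin> G \<longrightarrow> r < u \<bullet> mvec m)"
  shows "(\<lambda>k. \<delta> k powr (-r) * polyP c L (diag_scale (\<chi> j. \<delta> k powr (u$j)) s))
    \<longlonglongrightarrow> polyP c {m\<in>L. mvec m \<in> G} s"
proof -
  have "\<delta> k powr (-r) * polyP c L (diag_scale (\<chi> j. \<delta> k powr (u$j)) s) =
      (\<Sum>m\<in>L. c m * \<delta> k powr (u \<bullet> mvec m - r) * monom s m)" for k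
    using \<delta>(1)[of k]
    by (simp add: polyP_def monom_diag_scale_powr sum_distrib_left powr_diff powr_minus_divide mult_ac)
  moreover have "polyP c {m\<in>L. mvec m \<in> G} s = (\<Sum>m\<in>L. if mvec m \<in> G then c m * monom s m else 0)"
    using L by (simp add: polyP_def sum.inter_filter)
  moreover have "(\<lambda>k. c m * \<delta> k powr (u \<bullet> mvec m - r) * monom s m)
      \<longlonglongrightarrow> (if mvec m \<in> G then c m * monom s m else 0)" if m: "m \<in> L" for m
  proof (cases "mvec m \<in> G")
    case True
    then show ?thesis
      using level m \<delta>(1) by (simp add: less_imp_neq[symmetric])
  next
    case False
    then have "(\<lambda>k. \<delta> k powr (u \<bullet> mvec m - r)) \<longlonglongrightarrow> 0"
      using level m \<delta> by (intro tendsto_zero_powrI) (auto simp: less_imp_le)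
    then show ?thesis
      using False by (simp add: tendsto_mult_left_zero tendsto_mult_right_zero)
  qed
  ultimately show ?thesis
    by (simp only: tendsto_sum)
qed

lemma mvec_mem_newton: "m \<in> \<Omega> \<Longrightarrow> mvec m \<in> newton \<Omega> S"
  unfolding newton_def
  by (rule hull_inc) (force simp: Rplus_def intro!: exI[of _ 0])

text \<open>For the empty face any level below all of \<open>\<langle>u,\<Lambda>\<rangle>\<close> works, since \<open>P\<^sub>\<emptyset> = 0\<close>.\<close>

lemma dual_int_level:
  assumes \<Lambda>: "finite \<Lambda>" and u: "u \<in> dual_int F (newton \<Lambda> S) S"
  shows "\<exists>r. \<forall>m\<in>\<Lambda>. (mvec m \<in> F \<longrightarrow> u \<bullet> mvec m = r) \<and> (mvec m \<notin> F \<longrightarrow> r < u \<bullet> mvec m)"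
proof (cases "F = {}")
  case True
  define r where "r = Min (insert 0 ((\<lambda>m. u \<bullet> mvec m) ` \<Lambda>)) - 1"
  have "r < u \<bullet> mvec m" if "m \<in> \<Lambda>" for m
  proof -
    have "Min (insert 0 ((\<lambda>m. u \<bullet> mvec m) ` \<Lambda>)) \<le> u \<bullet> mvec m"
      using \<Lambda> that by (intro Min_le) auto
    then show ?thesis
      by (simp add: r_def)
  qed
  with True show ?thesis
    by blast
next
  case False
  then obtain r where "\<forall>x\<in>F. u \<bullet> x = r" "\<forall>y\<in>newton \<Lambda> S - F. r < u \<bullet> y"
    using u by (auto simp: dual_int_def)
  then show ?thesis
    using mvec_mem_newton by blast
qed

theorem mainTheorem17:
  fixes \<Lambda> :: "'d::finite \<Rightarrow> ('n::finite \<Rightarrow> nat) set"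
    and c :: "'d \<Rightarrow> ('n \<Rightarrow> nat) \<Rightarrow> real"
    and S S0 :: "'n set"
    and F :: "'d \<Rightarrow> (real^'n) set"
    and u :: "real^'n"
  assumes "\<forall>\<nu>. finite (\<Lambda> \<nu>) \<and> \<Lambda> \<nu> \<noteq> {}"
    and "\<forall>\<nu>. \<forall>m\<in>\<Lambda> \<nu>. c \<nu> m \<noteq> 0"
    and "\<forall>\<nu>. is_face (F \<nu>) (newton (\<Lambda> \<nu>) S)"
    and "\<exists>M. \<forall>r\<in>IS S. \<forall>\<xi>. \<exists>L.
           ((\<lambda>\<epsilon>. osc_int (\<lambda>\<nu>. polyP (c \<nu>) (\<Lambda> \<nu>)) \<xi> \<epsilon> r) \<longlongrightarrow> L)
             (at 0 within {\<epsilon>. \<forall>j. 0 < \<epsilon>$j}) \<and> norm L \<le> M"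
    and "S0 \<subseteq> S"
    and "\<forall>\<nu>. u \<in> dual_int (F \<nu>) (newton (\<Lambda> \<nu>) S) S"
    and "\<forall>j\<in>S0. u$j = 0"
    and "\<forall>j\<in>S - S0. 0 < u$j"
  shows "\<exists>M. \<forall>\<xi> a b. a \<in> IS S0 \<and> b \<in> IS S0 \<and> (\<forall>j. a$j < b$j) \<longrightarrow>
           norm (osc_int (\<lambda>\<nu>. polyP (c \<nu>) {m\<in>\<Lambda> \<nu>. mvec m \<in> F \<nu>}) \<xi> a b) \<le> M"
proof -
  define Q where "Q \<nu> = polyP (c \<nu>) (\<Lambda> \<nu>)" for \<nu>
  have Q_borel [measurable]: "Q \<nu> \<in> borel_measurable borel" for \<nu>
    by (simp add: Q_def)
  obtain M where lim: "\<forall>r\<in>IS S. \<forall>\<xi>. \<exists>L. ((\<lambda>\<epsilon>. osc_int Q \<xi> \<epsilon> r) \<longlongrightarrow> L)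
      (at 0 within {\<epsilon>. \<forall>j. 0 < \<epsilon>$j}) \<and> norm L \<le> M"
    using assms(4) unfolding Q_def by blast
  have "\<forall>\<nu>. \<exists>r. \<forall>m\<in>\<Lambda> \<nu>. (mvec m \<in> F \<nu> \<longrightarrow> u \<bullet> mvec m = r) \<and> (mvec m \<notin> F \<nu> \<longrightarrow> r < u \<bullet> mvec m)"
    using assms(1,6) by (blast intro: dual_int_level)
  then obtain r where level: "\<And>\<nu>. \<forall>m\<in>\<Lambda> \<nu>. (mvec m \<in> F \<nu> \<longrightarrow> u \<bullet> mvec m = r \<nu>) \<and>
      (mvec m \<notin> F \<nu> \<longrightarrow> r \<nu> < u \<bullet> mvec m)"
    by (metis choice)
  show ?thesis
  proof (intro exI[of _ "2 ^ CARD('n) * M"] allI impI)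
    fix \<xi> a b :: "real^_" assume ab: "a \<in> IS S0 \<and> b \<in> IS S0 \<and> (\<forall>j. a$j < b$j)"
    define \<delta> where "\<delta> k = inverse (real (Suc k))" for k
    define D where "D k = (\<chi> j. \<delta> k powr (u$j))" for k
    define \<xi>' where "\<xi>' k = (\<chi> \<nu>. \<xi>$\<nu> * \<delta> k powr (- r \<nu>))" for k
    have \<delta>_pos: "0 < \<delta> k" for k
      by (simp add: \<delta>_def)
    have \<delta>_lim: "\<delta> \<longlonglongrightarrow> 0"
      unfolding \<delta>_def by (rule LIMSEQ_inverse_real_of_nat)
    have D: "\<forall>j. 0 < D k $ j" for k
      using \<delta>_pos[of k] by (simp add: D_def)
    have "eventually (\<lambda>k. norm (osc_int Q (\<xi>' k) (diag_scale (D k) a) (diag_scale (D k) b))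
        \<le> 2 ^ CARD('n) * M) sequentially"
      unfolding D_def using assms(7,8) ab
      by (intro eventually_norm_osc_int_rescaled_le[OF Q_borel lim \<delta>_pos \<delta>_lim]) auto
    moreover have "(\<lambda>k. \<xi>' k $ \<nu> * Q \<nu> (diag_scale (D k) s))
        \<longlonglongrightarrow> \<xi>$\<nu> * polyP (c \<nu>) {m\<in>\<Lambda> \<nu>. mvec m \<in> F \<nu>} s" for \<nu> s
      unfolding \<xi>'_def D_def Q_def vec_lambda_beta mult.assoc
      using assms(1) by (intro tendsto_mult_left tendsto_rescaled_polyP[OF _ \<delta>_pos \<delta>_lim level]) auto
    then have "(\<lambda>k. osc_int Q (\<xi>' k) (diag_scale (D k) a) (diag_scale (D k) b))
        \<longlonglongrightarrow> osc_int (\<lambda>\<nu>. polyP (c \<nu>) {m\<in>\<Lambda> \<nu>. mvec m \<in> F \<nu>}) \<xi> a b"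
      unfolding osc_int_diag_scale[OF D Q_borel] using ab
      by (intro tendsto_osc_int) (auto simp: IS_def)
    ultimately show "norm (osc_int (\<lambda>\<nu>. polyP (c \<nu>) {m\<in>\<Lambda> \<nu>. mvec m \<in> F \<nu>}) \<xi> a b)
        \<le> 2 ^ CARD('n) * M"
      by (intro Lim_norm_ubound[OF trivial_limit_sequentially])
  qed
qed

end
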